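(* Let $d\ge 2$ and let $X_1,\ldots,X_d$ be random variables with joint density $p_{1\cdots d}$ and marginal densities $p_1,\ldots,p_d$ (all entropies and divergences below assumed finite). For a subset $b\subseteq[d]$ let $p_b$ be the joint (marginal) density of $(X_i)_{i\in b}$, and for a partition $\pi=b_1|\cdots|b_r$ of $[d]$ let $p_\pi=\prod_{j=1}^r p_{b_j}$ and $|\pi|=r$. Let $D_{\mathrm{KL}}(p\|q)=\int p\log(p/q)\,\mathrm{d}x$. Define $$\mathrm{II}(d)=-\sum_{T\subseteq\{X_1,\ldots,X_d\}}(-1)^{d-|T|}\,H(T),$$ where $H(T)$ is the (joint) entropy of the variables in $T$ (with $H(\emptyset)=0$), $$\mathrm{LI}(d)=\sum_{\pi_l}(-1)^{|\pi_l|-1}D_{\mathrm{KL}}\Big(p_{\pi_l}\,\Big\|\,\prod_{i=1}^d p_i\Big),$$ where the sum runs over all partitions $\pi_l$ of $[d]$ having at most one block of size at least two, and $$\mathrm{SI}(d)=\sum_{\pi}(|\pi|-1)!\,(-1)^{|\pi|-1}D_{\mathrm{KL}}\Big(p_{\pi}\,\Big\|\,\prod_{i=1}^d p_i\Big),$$ where the sum runs over all partitions $\pi$ of $[d]$. Then $$\mathrm{II}(d)=\mathrm{LI}(d)=\mathrm{SI}(d).$$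
   Context: $\mathrm{II}$ is the interaction information, $\mathrm{LI}$ the Lancaster information and $\mathrm{SI}$ the Streitberg information (here with the Kullback–Leibler divergence as the divergence). A partition of $[d]$ is a collection of non-empty pairwise disjoint blocks covering $[d]$. *)

theory Defs
  imports "HOL-Analysis.Analysis" "HOL-Library.Disjoint_Sets"
begin

text \<open>Real-valued random variables X_i, i in the index set I = {..<d}; a point of the
  sample space is x :: nat => real (extensional on I), with reference measure the product
  Lebesgue measure.\<close>

abbreviation Leb :: "nat set \<Rightarrow> (nat \<Rightarrow> real) measure" where
  "Leb b \<equiv> PiM b (\<lambda>_. lborel)"

definition marg :: "nat set \<Rightarrow> ((nat \<Rightarrow> real) \<Rightarrow> real) \<Rightarrow> nat set \<Rightarrow> (nat \<Rightarrow> real) \<Rightarrow> real" where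
  "marg I p b y = (\<integral>z. p (merge b (I - b) (y, z)) \<partial>Leb (I - b))"

definition ent :: "nat set \<Rightarrow> ((nat \<Rightarrow> real) \<Rightarrow> real) \<Rightarrow> nat set \<Rightarrow> real" where
  "ent I p b = - (\<integral>y. marg I p b y * ln (marg I p b y) \<partial>Leb b)"

definition part_dens :: "nat set \<Rightarrow> ((nat \<Rightarrow> real) \<Rightarrow> real) \<Rightarrow> nat set set \<Rightarrow> (nat \<Rightarrow> real) \<Rightarrow> real" where
  "part_dens I p P x = (\<Prod>B\<in>P. marg I p B (restrict x B))"

definition indep_dens :: "nat set \<Rightarrow> ((nat \<Rightarrow> real) \<Rightarrow> real) \<Rightarrow> (nat \<Rightarrow> real) \<Rightarrow> real" where
  "indep_dens I p x = (\<Prod>i\<in>I. marg I p {i} (restrict x {i}))"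

definition KL_part :: "nat set \<Rightarrow> ((nat \<Rightarrow> real) \<Rightarrow> real) \<Rightarrow> nat set set \<Rightarrow> real" where
  "KL_part I p P = (\<integral>x. part_dens I p P x * ln (part_dens I p P x / indep_dens I p x) \<partial>Leb I)"

definition II :: "nat \<Rightarrow> ((nat \<Rightarrow> real) \<Rightarrow> real) \<Rightarrow> real" where
  "II d p = - (\<Sum>T\<in>Pow {..<d}. (-1) ^ (d - card T) * ent {..<d} p T)"

definition LI :: "nat \<Rightarrow> ((nat \<Rightarrow> real) \<Rightarrow> real) \<Rightarrow> real" where
  "LI d p = (\<Sum>P\<in>{P. partition_on {..<d} P \<and> card {B\<in>P. 2 \<le> card B} \<le> 1}.
              (-1) ^ (card P - 1) * KL_part {..<d} p P)"

definition SI :: "nat \<Rightarrow> ((nat \<Rightarrow> real) \<Rightarrow> real) \<Rightarrow> real" where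
  "SI d p = (\<Sum>P\<in>{P. partition_on {..<d} P}.
              fact (card P - 1) * (-1) ^ (card P - 1) * KL_part {..<d} p P)"

end

(* The divergences all split into block terms. The marginal of the product density p_pi on
   any subset of one of its blocks C is the corresponding marginal of p (the other blocks
   integrate to 1), so the cross-entropy integrals in D(p_pi || prod_i p_i) collapse to
   entropies and D(p_pi || prod_i p_i) = sum over C in pi of TC(C), where
   TC(C) = sum_{i in C} H(X_i) - H(C) is the total correlation of the block.
   Hence II, LI and SI are linear combinations of the numbers TC(B), and each equals
   sum_{B subset [d]} (-1)^(d-|B|) TC(B): for II the singleton entropies cancel because d >= 2;
   for SI and LI one sums over partitions with a marked block C, i.e. over C together with a
   partition of the complement of C. For SI this leaves
   sum_{partitions S of A} |S|! (-1)^|S| = (-1)^|A|; for LI only the unique block of size at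
   least two can carry a nonzero TC, and the rest of the partition must consist of singletons. *)

theory Submission
  imports Defs
begin

section \<open>Marginal densities and divergences\<close>

interpretation lborel_product: product_sigma_finite "\<lambda>_::nat. lborel :: real measure"
  by standard

lemma restrict_in_space_Leb: "y \<in> space (Leb B) \<Longrightarrow> restrict y B = y"
  by (simp add: space_PiM PiE_def extensional_restrict)

lemma nn_integral_prod_restrict_blocks:
  fixes f :: "nat set \<Rightarrow> (nat \<Rightarrow> real) \<Rightarrow> ennreal"
  assumes "finite P" "\<And>C. C \<in> P \<Longrightarrow> finite C" "disjoint P"
    and f: "\<And>C. C \<in> P \<Longrightarrow> f C \<in> borel_measurable (Leb C)"
  shows "(\<integral>\<^sup>+x. (\<Prod>C\<in>P. f C (restrict x C)) \<partial>Leb (\<Union>P)) = (\<Prod>C\<in>P. integral\<^sup>N (Leb C) (f C))"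
  using assms
proof (induction P rule: finite_induct)
  case empty
  then show ?case by (simp add: PiM_empty)
next
  case (insert C0 P)
  let ?R = "\<Union>P"
  have disj: "C0 \<inter> ?R = {}"
    using insert.prems(2) insert.hyps(2) by (auto simp: pairwise_def disjnt_def)
  have fin: "finite C0" "finite ?R" using insert.hyps(1) insert.prems(1) by auto
  have meas: "(\<lambda>x. \<Prod>C\<in>Q. f C (restrict x C)) \<in> borel_measurable (Leb J)"
    if "Q \<subseteq> insert C0 P" "\<Union>Q \<subseteq> J" for Q J
    using that insert.prems(3)
    by (intro borel_measurable_prod_ennreal measurable_compose[OF measurable_restrict_subset]) auto
  have IH: "(\<integral>\<^sup>+z. (\<Prod>C\<in>P. f C (restrict z C)) \<partial>Leb ?R) = (\<Prod>C\<in>P. integral\<^sup>N (Leb C) (f C))"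
    by (rule insert.IH) (use insert.prems in \<open>auto simp: pairwise_insert\<close>)
  have split: "(\<Prod>C\<in>insert C0 P. f C (restrict (merge C0 ?R (y, z)) C))
      = f C0 y * (\<Prod>C\<in>P. f C (restrict z C))" if "y \<in> space (Leb C0)" for y z
  proof -
    have "restrict (merge C0 ?R (y, z)) C = restrict z C" if "C \<in> P" for C
      using disj that by (auto simp: restrict_def merge_def fun_eq_iff)
    then show ?thesis
      using insert.hyps disj restrict_in_space_Leb[OF \<open>y \<in> space (Leb C0)\<close>] by simp
  qed
  have "(\<integral>\<^sup>+x. (\<Prod>C\<in>insert C0 P. f C (restrict x C)) \<partial>Leb (C0 \<union> ?R))
      = (\<integral>\<^sup>+y. (\<integral>\<^sup>+z. f C0 y * (\<Prod>C\<in>P. f C (restrict z C)) \<partial>Leb ?R) \<partial>Leb C0)"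
    using lborel_product.product_nn_integral_fold[OF disj fin meas[OF order_refl]] split
    by (auto intro!: nn_integral_cong)
  also have "\<dots> = (\<integral>\<^sup>+y. f C0 y * (\<integral>\<^sup>+z. (\<Prod>C\<in>P. f C (restrict z C)) \<partial>Leb ?R) \<partial>Leb C0)"
    by (intro nn_integral_cong nn_integral_cmult meas) auto
  also have "\<dots> = (\<integral>\<^sup>+y. f C0 y * (\<Prod>C\<in>P. integral\<^sup>N (Leb C) (f C)) \<partial>Leb C0)"
    by (simp only: IH)
  also have "\<dots> = (\<Prod>C\<in>insert C0 P. integral\<^sup>N (Leb C) (f C))"
    using insert.hyps insert.prems(3) by (simp add: nn_integral_multc)
  finally show ?case by (simp only: Union_insert)
qed

lemma
  fixes a :: "'a \<Rightarrow> real" and b :: "'b \<Rightarrow> real" and \<phi> :: "'b \<Rightarrow> real"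
  assumes image: "distr (density M a) N T = density N b"
    and [measurable]: "T \<in> measurable M N" "a \<in> borel_measurable M" "b \<in> borel_measurable N"
      "\<phi> \<in> borel_measurable N"
    and nonneg: "AE x in M. 0 \<le> a x" "AE y in N. 0 \<le> b y"
  shows integrable_density_comp_iff:
      "integrable M (\<lambda>x. a x * \<phi> (T x)) \<longleftrightarrow> integrable N (\<lambda>y. b y * \<phi> y)"
    and integral_density_comp_eq: "(\<integral>x. a x * \<phi> (T x) \<partial>M) = (\<integral>y. b y * \<phi> y \<partial>N)"
proof -
  have T: "T \<in> measurable (density M a) N" by simp
  have "integrable M (\<lambda>x. a x * \<phi> (T x)) \<longleftrightarrow> integrable (distr (density M a) N T) \<phi>"
    using nonneg by (simp add: integrable_density integrable_distr_eq[OF T])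
  also have "\<dots> \<longleftrightarrow> integrable N (\<lambda>y. b y * \<phi> y)"
    using nonneg by (simp add: image integrable_density)
  finally show "integrable M (\<lambda>x. a x * \<phi> (T x)) \<longleftrightarrow> integrable N (\<lambda>y. b y * \<phi> y)" .
  have "(\<integral>x. a x * \<phi> (T x) \<partial>M) = integral\<^sup>L (distr (density M a) N T) \<phi>"
    using nonneg by (simp add: integral_density integral_distr[OF T])
  also have "\<dots> = (\<integral>y. b y * \<phi> y \<partial>N)"
    using nonneg by (simp add: image integral_density)
  finally show "(\<integral>x. a x * \<phi> (T x) \<partial>M) = (\<integral>y. b y * \<phi> y \<partial>N)" .
qed

lemma emeasure_distr_restrict_density:
  assumes "B \<subseteq> I" "f \<in> borel_measurable (Leb I)" "A \<in> sets (Leb B)"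
  shows "emeasure (distr (density (Leb I) f) (Leb B) (\<lambda>x. restrict x B)) A
    = (\<integral>\<^sup>+x. ennreal (f x) * indicator A (restrict x B) \<partial>Leb I)"
proof -
  have R: "(\<lambda>x. restrict x B) \<in> measurable (Leb I) (Leb B)"
    by (rule measurable_restrict_subset[OF assms(1)])
  then have "(\<lambda>x. restrict x B) \<in> measurable (density (Leb I) f) (Leb B)" by simp
  from emeasure_distr[OF this assms(3)] measurable_sets[OF R assms(3)] assms(2) show ?thesis
    by (auto simp: emeasure_density intro!: nn_integral_cong split: split_indicator)
qed

locale joint_density =
  fixes I :: "nat set" and p :: "(nat \<Rightarrow> real) \<Rightarrow> real"
  assumes finite_I: "finite I"
    and p_measurable[measurable]: "p \<in> borel_measurable (Leb I)"
    and p_nonneg: "\<And>x. x \<in> space (Leb I) \<Longrightarrow> 0 \<le> p x"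
    and p_integrable: "integrable (Leb I) p"
    and p_integral: "(\<integral>x. p x \<partial>Leb I) = 1"
begin

lemma merge_in_space: "B \<subseteq> I \<Longrightarrow> merge B (I - B) (y, z) \<in> space (Leb I)"
  using extensional_merge[of B "I - B" y z] by (simp add: space_PiM PiE_def Un_absorb1)

lemma measurable_p_merge:
  assumes "B \<subseteq> I"
  shows "(\<lambda>(y, z). p (merge B (I - B) (y, z))) \<in> borel_measurable (Leb B \<Otimes>\<^sub>M Leb (I - B))"
proof -
  have "p \<in> borel_measurable (Leb (B \<union> (I - B)))"
    using assms by (simp add: Un_absorb1)
  from measurable_comp[OF measurable_merge this] show ?thesis
    by (simp add: comp_def case_prod_beta')
qed

lemma marg_measurable: "B \<subseteq> I \<Longrightarrow> marg I p B \<in> borel_measurable (Leb B)"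
  unfolding marg_def
  using sigma_finite_measure.borel_measurable_lebesgue_integral[OF lborel_product.sigma_finite
      measurable_p_merge] finite_I
  by (simp add: case_prod_beta')

lemma marg_nonneg: "B \<subseteq> I \<Longrightarrow> 0 \<le> marg I p B y"
  unfolding marg_def by (intro integral_nonneg_AE AE_I2 p_nonneg merge_in_space)

lemma AE_nn_integral_merge_eq_marg:
  assumes "B \<subseteq> I"
  shows "AE y in Leb B. (\<integral>\<^sup>+z. p (merge B (I - B) (y, z)) \<partial>Leb (I - B)) = marg I p B y"
proof -
  have fin: "finite B" "finite (I - B)" using assms finite_I finite_subset by auto
  interpret pair_sigma_finite "Leb B" "Leb (I - B)"
    using fin by (intro pair_sigma_finite.intro lborel_product.sigma_finite)
  have "integrable (distr (Leb B \<Otimes>\<^sub>M Leb (I - B)) (Leb (B \<union> (I - B))) (merge B (I - B))) p"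
    using lborel_product.distr_merge[of B "I - B"] fin assms p_integrable by (simp add: Un_absorb1)
  then have "integrable (Leb B \<Otimes>\<^sub>M Leb (I - B)) (\<lambda>x. p (merge B (I - B) x))"
    by (rule integrable_distr[OF measurable_merge])
  then have "AE y in Leb B. integrable (Leb (I - B)) (\<lambda>z. p (merge B (I - B) (y, z)))"
    by (intro AE_integrable_fst) (simp add: case_prod_beta')
  then show ?thesis
    by eventually_elim
      (simp add: marg_def nn_integral_eq_integral p_nonneg merge_in_space assms)
qed

lemma distr_restrict_density_marg:
  assumes "B \<subseteq> I"
  shows "distr (density (Leb I) p) (Leb B) (\<lambda>x. restrict x B) = density (Leb B) (marg I p B)"
proof (rule measure_eqI)
  fix A assume "A \<in> sets (distr (density (Leb I) p) (Leb B) (\<lambda>x. restrict x B))"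
  then have A[measurable]: "A \<in> sets (Leb B)" by simp
  have U: "B \<union> (I - B) = I" and disj: "B \<inter> (I - B) = {}" using assms by auto
  have fin: "finite B" "finite (I - B)" using assms finite_I finite_subset by auto
  have "emeasure (distr (density (Leb I) p) (Leb B) (\<lambda>x. restrict x B)) A
      = (\<integral>\<^sup>+x. ennreal (p x) * indicator A (restrict x B) \<partial>Leb I)"
    by (rule emeasure_distr_restrict_density[OF assms p_measurable A])
  also have "\<dots> = (\<integral>\<^sup>+y. (\<integral>\<^sup>+z. ennreal (p (merge B (I - B) (y, z))) * indicator A y \<partial>Leb (I - B)) \<partial>Leb B)"
  proof -
    have "(\<lambda>x. ennreal (p x) * indicator A (restrict x B)) \<in> borel_measurable (Leb (B \<union> (I - B)))"
      unfolding U using measurable_compose[OF measurable_restrict_subset[OF assms] borel_measurable_indicator[OF A]]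
      by (intro borel_measurable_times_ennreal) auto
    from lborel_product.product_nn_integral_fold[OF disj fin this] show ?thesis
      unfolding U using disj by (auto intro!: nn_integral_cong simp: restrict_in_space_Leb)
  qed
  also have "\<dots> = (\<integral>\<^sup>+y. (\<integral>\<^sup>+z. ennreal (p (merge B (I - B) (y, z))) \<partial>Leb (I - B)) * indicator A y \<partial>Leb B)"
  proof (intro nn_integral_cong nn_integral_multc)
    fix y assume "y \<in> space (Leb B)"
    from measurable_Pair2[OF measurable_p_merge[OF assms] this]
    show "(\<lambda>z. ennreal (p (merge B (I - B) (y, z)))) \<in> borel_measurable (Leb (I - B))" by simp
  qed
  also have "\<dots> = (\<integral>\<^sup>+y. ennreal (marg I p B y) * indicator A y \<partial>Leb B)"
    using AE_nn_integral_merge_eq_marg[OF assms] by (auto intro!: nn_integral_cong_AE)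
  also have "\<dots> = emeasure (density (Leb B) (marg I p B)) A"
    using marg_measurable[OF assms] by (simp add: emeasure_density)
  finally show "emeasure (distr (density (Leb I) p) (Leb B) (\<lambda>x. restrict x B)) A
      = emeasure (density (Leb B) (marg I p B)) A" .
qed simp

lemma nn_integral_marg_eq_1:
  assumes "B \<subseteq> I"
  shows "(\<integral>\<^sup>+y. marg I p B y \<partial>Leb B) = 1"
proof -
  have "(\<integral>\<^sup>+y. marg I p B y \<partial>Leb B) = emeasure (density (Leb B) (marg I p B)) (space (Leb B))"
    using marg_measurable[OF assms] by (auto simp: emeasure_density intro!: nn_integral_cong)
  also have "\<dots> = emeasure (distr (density (Leb I) p) (Leb B) (\<lambda>x. restrict x B)) (space (Leb B))"
    by (simp add: distr_restrict_density_marg[OF assms])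
  also have "\<dots> = (\<integral>\<^sup>+x. p x \<partial>Leb I)"
    unfolding emeasure_distr_restrict_density[OF assms p_measurable sets.top]
    by (auto simp: space_PiM intro!: nn_integral_cong)
  also have "\<dots> = 1"
    using p_integrable p_nonneg p_integral by (simp add: nn_integral_eq_integral)
  finally show ?thesis .
qed

lemma partition_blocks:
  assumes "partition_on I P"
  shows "finite P" "\<And>C. C \<in> P \<Longrightarrow> C \<subseteq> I" "\<And>C. C \<in> P \<Longrightarrow> finite C"
  using assms finite_I finite_elements[OF finite_I assms]
  by (auto simp: partition_on_def intro: finite_subset)

lemma part_dens_measurable:
  assumes "partition_on I P"
  shows "part_dens I p P \<in> borel_measurable (Leb I)"
  unfolding part_dens_def[abs_def] using assms partition_blocks(2)[OF assms]
  by (intro borel_measurable_prod measurable_compose[OF measurable_restrict_subset marg_measurable]) auto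

lemma part_dens_nonneg: "partition_on I P \<Longrightarrow> 0 \<le> part_dens I p P x"
  unfolding part_dens_def using partition_blocks(2) marg_nonneg by (metis prod_nonneg)

lemma distr_restrict_density_part_dens_block:
  assumes P: "partition_on I P" and C: "C \<in> P"
  shows "distr (density (Leb I) (part_dens I p P)) (Leb C) (\<lambda>x. restrict x C)
    = density (Leb C) (marg I p C)"
proof (rule measure_eqI)
  fix A assume "A \<in> sets (distr (density (Leb I) (part_dens I p P)) (Leb C) (\<lambda>x. restrict x C))"
  then have A[measurable]: "A \<in> sets (Leb C)" by simp
  note blocks = partition_blocks[OF P]
  define g where "g C' = (if C' = C then (\<lambda>y. ennreal (marg I p C y) * indicator A y)
    else (\<lambda>y. ennreal (marg I p C' y)))" for C'
  have g_measurable: "g C' \<in> borel_measurable (Leb C')" if "C' \<in> P" for C'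
    using marg_measurable blocks(2)[OF that] by (simp add: g_def)
  have "emeasure (distr (density (Leb I) (part_dens I p P)) (Leb C) (\<lambda>x. restrict x C)) A
      = (\<integral>\<^sup>+x. ennreal (part_dens I p P x) * indicator A (restrict x C) \<partial>Leb I)"
    by (rule emeasure_distr_restrict_density[OF blocks(2)[OF C] part_dens_measurable[OF P] A])
  also have "\<dots> = (\<integral>\<^sup>+x. (\<Prod>C'\<in>P. g C' (restrict x C')) \<partial>Leb I)"
  proof (intro nn_integral_cong)
    fix x
    have "g C' y = ennreal (marg I p C' y) * (if C' = C then indicator A y else 1)" for C' y
      by (simp add: g_def)
    then show "ennreal (part_dens I p P x) * indicator A (restrict x C) = (\<Prod>C'\<in>P. g C' (restrict x C'))"
      using C blocks(1,2) marg_nonneg by (simp add: prod.distrib prod_ennreal part_dens_def)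
  qed
  also have "\<dots> = (\<Prod>C'\<in>P. integral\<^sup>N (Leb C') (g C'))"
    using nn_integral_prod_restrict_blocks[OF blocks(1,3) partition_onD2[OF P] g_measurable]
    by (simp only: partition_onD1[OF P])
  also have "\<dots> = (\<integral>\<^sup>+y. ennreal (marg I p C y) * indicator A y \<partial>Leb C)"
  proof -
    have "integral\<^sup>N (Leb C') (g C')
        = (if C' = C then \<integral>\<^sup>+y. ennreal (marg I p C y) * indicator A y \<partial>Leb C else 1)"
      if "C' \<in> P" for C'
      using nn_integral_marg_eq_1[OF blocks(2)[OF that]] by (simp add: g_def)
    then show ?thesis
      using C blocks(1) by (simp add: prod.delta cong: prod.cong)
  qed
  also have "\<dots> = emeasure (density (Leb C) (marg I p C)) A"
    using marg_measurable[OF blocks(2)[OF C]] by (simp add: emeasure_density)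
  finally show "emeasure (distr (density (Leb I) (part_dens I p P)) (Leb C) (\<lambda>x. restrict x C)) A
      = emeasure (density (Leb C) (marg I p C)) A" .
qed simp

lemma distr_restrict_density_part_dens:
  assumes P: "partition_on I P" and C: "C \<in> P" and B: "B \<subseteq> C"
  shows "distr (density (Leb I) (part_dens I p P)) (Leb B) (\<lambda>x. restrict x B)
    = density (Leb B) (marg I p B)"
proof -
  have CI: "C \<subseteq> I" using partition_blocks(2)[OF P C] .
  have comp: "(\<lambda>x. restrict x B) \<circ> (\<lambda>x. restrict x C) = (\<lambda>x. restrict x B)"
    using B by (auto simp: fun_eq_iff Int_absorb1)
  have RB: "(\<lambda>x. restrict x B) \<in> measurable (Leb C) (Leb B)"
    by (rule measurable_restrict_subset[OF B])
  have RC: "(\<lambda>x. restrict x C) \<in> measurable (density (Leb I) f) (Leb C)" for f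
    using measurable_restrict_subset[OF CI] by simp
  have "distr (density (Leb I) (part_dens I p P)) (Leb B) (\<lambda>x. restrict x B)
      = distr (distr (density (Leb I) (part_dens I p P)) (Leb C) (\<lambda>x. restrict x C)) (Leb B) (\<lambda>x. restrict x B)"
    by (simp add: distr_distr[OF RB RC] comp)
  also have "\<dots> = distr (distr (density (Leb I) p) (Leb C) (\<lambda>x. restrict x C)) (Leb B) (\<lambda>x. restrict x B)"
    by (simp only: distr_restrict_density_part_dens_block[OF P C] distr_restrict_density_marg[OF CI])
  also have "\<dots> = distr (density (Leb I) p) (Leb B) (\<lambda>x. restrict x B)"
    by (simp only: distr_distr[OF RB RC] comp)
  also have "\<dots> = density (Leb B) (marg I p B)"
    using B CI by (intro distr_restrict_density_marg) auto
  finally show ?thesis .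
qed

lemma
  assumes P: "partition_on I P" and C: "C \<in> P" and B: "B \<subseteq> C"
    and finite_entropy: "integrable (Leb B) (\<lambda>y. marg I p B y * ln (marg I p B y))"
  shows integrable_part_dens_ln_marg:
      "integrable (Leb I) (\<lambda>x. part_dens I p P x * ln (marg I p B (restrict x B)))"
    and integral_part_dens_ln_marg:
      "(\<integral>x. part_dens I p P x * ln (marg I p B (restrict x B)) \<partial>Leb I) = - ent I p B"
proof -
  have BI: "B \<subseteq> I" using partition_blocks(2)[OF P C] B by blast
  note transfer = distr_restrict_density_part_dens[OF P C B] measurable_restrict_subset[OF BI]
    part_dens_measurable[OF P] marg_measurable[OF BI]
    borel_measurable_ln[OF marg_measurable[OF BI]]
    AE_I2[OF part_dens_nonneg[OF P]] AE_I2[OF marg_nonneg[OF BI]]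
  show "integrable (Leb I) (\<lambda>x. part_dens I p P x * ln (marg I p B (restrict x B)))"
    using integrable_density_comp_iff[OF transfer] finite_entropy by simp
  show "(\<integral>x. part_dens I p P x * ln (marg I p B (restrict x B)) \<partial>Leb I) = - ent I p B"
    using integral_density_comp_eq[OF transfer] by (simp add: ent_def)
qed

lemma AE_part_dens_pos_imp_marg_nonzero:
  assumes P: "partition_on I P" and i: "i \<in> I"
  shows "AE x in Leb I. 0 < part_dens I p P x \<longrightarrow> marg I p {i} (restrict x {i}) \<noteq> 0"
proof -
  obtain C where C: "C \<in> P" "i \<in> C" using partition_onD1[OF P] i by blast
  have iI: "{i} \<subseteq> I" using i by simp
  note [measurable] = marg_measurable[OF iI] part_dens_measurable[OF P] measurable_restrict_subset[OF iI]
  have "{i} \<subseteq> C" using C(2) by simp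
  note marginal = distr_restrict_density_part_dens[OF P C(1) this]
  have "AE y in density (Leb {i}) (marg I p {i}). marg I p {i} y \<noteq> 0"
    by (subst AE_density) auto
  then have "AE y in distr (density (Leb I) (part_dens I p P)) (Leb {i}) (\<lambda>x. restrict x {i}).
      marg I p {i} y \<noteq> 0"
    unfolding marginal .
  then have "AE x in density (Leb I) (part_dens I p P). marg I p {i} (restrict x {i}) \<noteq> 0"
    by (subst (asm) AE_distr_iff) auto
  then show ?thesis
    by (subst (asm) AE_density) auto
qed

lemma indep_dens_measurable: "indep_dens I p \<in> borel_measurable (Leb I)"
  unfolding indep_dens_def[abs_def]
  by (intro borel_measurable_prod measurable_compose[OF measurable_restrict_subset marg_measurable]) auto

lemma ln_part_dens_div_indep_dens:
  assumes P: "partition_on I P" and pos: "part_dens I p P x \<noteq> 0"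
    and single: "\<And>i. i \<in> I \<Longrightarrow> marg I p {i} (restrict x {i}) \<noteq> 0"
  shows "ln (part_dens I p P x / indep_dens I p x)
    = (\<Sum>C\<in>P. ln (marg I p C (restrict x C))) - (\<Sum>i\<in>I. ln (marg I p {i} (restrict x {i})))"
proof -
  have "marg I p C (restrict x C) \<noteq> 0" if "C \<in> P" for C
    using pos that partition_blocks(1)[OF P] by (auto simp: part_dens_def)
  then have "ln (part_dens I p P x) = (\<Sum>C\<in>P. ln (marg I p C (restrict x C)))"
    unfolding part_dens_def using partition_blocks(1)[OF P] by (rule ln_prod[rotated])
  moreover have "ln (indep_dens I p x) = (\<Sum>i\<in>I. ln (marg I p {i} (restrict x {i})))"
    unfolding indep_dens_def using finite_I single by (rule ln_prod)
  moreover have "indep_dens I p x \<noteq> 0"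
    unfolding indep_dens_def using finite_I single by simp
  ultimately show ?thesis
    using pos by (simp add: ln_div)
qed

lemma KL_part_eq_entropies:
  assumes P: "partition_on I P"
    and finite_entropy: "\<And>B. B \<subseteq> I \<Longrightarrow> integrable (Leb B) (\<lambda>y. marg I p B y * ln (marg I p B y))"
  shows "KL_part I p P = (\<Sum>i\<in>I. ent I p {i}) - (\<Sum>C\<in>P. ent I p C)"
proof -
  define L where "L B x = part_dens I p P x * ln (marg I p B (restrict x B))" for B x
  have ln_marg_term: "integrable (Leb I) (L B) \<and> integral\<^sup>L (Leb I) (L B) = - ent I p B"
    if "C \<in> P" "B \<subseteq> C" for B C
    using integrable_part_dens_ln_marg[OF P that] integral_part_dens_ln_marg[OF P that]
      finite_entropy partition_blocks(2)[OF P that(1)] that(2) by (simp add: L_def[abs_def])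
  have block: "integrable (Leb I) (L C) \<and> integral\<^sup>L (Leb I) (L C) = - ent I p C" if "C \<in> P" for C
    using ln_marg_term[OF that order_refl] .
  have single: "integrable (Leb I) (L {i}) \<and> integral\<^sup>L (Leb I) (L {i}) = - ent I p {i}" if "i \<in> I" for i
    using ln_marg_term partition_onD1[OF P] that by blast
  have "AE x in Leb I. \<forall>i\<in>I. 0 < part_dens I p P x \<longrightarrow> marg I p {i} (restrict x {i}) \<noteq> 0"
    by (rule AE_finite_allI[OF finite_I AE_part_dens_pos_imp_marg_nonzero[OF P]])
  then have "AE x in Leb I. part_dens I p P x * ln (part_dens I p P x / indep_dens I p x)
      = (\<Sum>C\<in>P. L C x) - (\<Sum>i\<in>I. L {i} x)"
  proof eventually_elim
    case (elim x)
    show ?case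
    proof (cases "part_dens I p P x = 0")
      case False
      with part_dens_nonneg[OF P, of x] elim show ?thesis
        by (simp add: ln_part_dens_div_indep_dens[OF P] L_def right_diff_distrib sum_distrib_left)
    qed (simp add: L_def)
  qed
  then have "KL_part I p P = (\<integral>x. (\<Sum>C\<in>P. L C x) - (\<Sum>i\<in>I. L {i} x) \<partial>Leb I)"
    unfolding KL_part_def using block single part_dens_measurable[OF P] indep_dens_measurable
    by (intro integral_cong_AE borel_measurable_diff borel_measurable_sum) auto
  also have "\<dots> = (\<Sum>C\<in>P. integral\<^sup>L (Leb I) (L C)) - (\<Sum>i\<in>I. integral\<^sup>L (Leb I) (L {i}))"
    using block single by (simp add: Bochner_Integration.integral_diff Bochner_Integration.integral_sum)
  also have "\<dots> = (\<Sum>i\<in>I. ent I p {i}) - (\<Sum>C\<in>P. ent I p C)"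
    using block single by (simp add: sum_negf)
  finally show ?thesis .
qed

lemma ent_empty: "ent I p {} = 0"
proof -
  have "marg I p {} y = 1" for y
  proof -
    have "merge {} I (y, z) = z" if "z \<in> space (Leb I)" for z
      using that by (auto simp: merge_def space_PiM PiE_def extensional_def fun_eq_iff)
    then show ?thesis
      unfolding marg_def using p_integral by (simp cong: Bochner_Integration.integral_cong)
  qed
  then show ?thesis by (simp add: ent_def)
qed

end

section \<open>Sums over set partitions\<close>

lemma sum_supersets_minus_one_power_diff:
  assumes "finite S" "U \<subset> S"
  shows "(\<Sum>T | T \<subseteq> S \<and> U \<subseteq> T. (-1::'b::ring_1) ^ (card S - card T)) = 0"
proof -
  have "(\<Sum>T | T \<subseteq> S \<and> U \<subseteq> T. (-1::'b) ^ (card S - card T))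
      = (-1) ^ card S * (\<Sum>T | T \<subseteq> S \<and> U \<subseteq> T. (-1) ^ card T)"
    using assms(1) by (auto simp: sum_distrib_left card_mono power_add
        simp flip: neg_one_power_add_eq_neg_one_power_diff intro!: sum.cong)
  also have "(\<Sum>T | T \<subseteq> S \<and> U \<subseteq> T. (-1::'b) ^ card T) = 0"
    using assms by (intro sum_alternating_cancels) (simp_all add: card_subsupersets_even_odd conj_ac)
  finally show ?thesis by simp
qed

lemma partition_on_remove_block:
  assumes "partition_on A P" "C \<in> P"
  shows "partition_on (A - C) (P - {C})" "C \<subseteq> A" "C \<noteq> {}"
proof -
  have "disjnt C (\<Union>(P - {C}))"
    using assms partition_onD2[OF assms(1)] by (auto simp: pairwise_def disjnt_def)
  moreover have "insert C (P - {C}) = P" using assms(2) by auto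
  ultimately show "partition_on (A - C) (P - {C})" "C \<subseteq> A" "C \<noteq> {}"
    using partition_on_insert[of C "P - {C}" A] assms(1) by auto
qed

lemma partition_on_insert_block:
  assumes "partition_on (A - B) T" "B \<subseteq> A" "B \<noteq> {}"
  shows "partition_on A (insert B T)" "B \<notin> T"
proof -
  have "disjnt B (\<Union>T)" using partition_onD1[OF assms(1)] by (auto simp: disjnt_def)
  then show "partition_on A (insert B T)" using partition_on_insert assms by blast
  show "B \<notin> T" using partition_onD1[OF assms(1)] assms(3) by blast
qed

lemma sum_partition_on_pick_block:
  fixes g :: "'a set \<Rightarrow> 'a set set \<Rightarrow> 'b::comm_monoid_add"
  assumes A: "finite A"
  shows "(\<Sum>P | partition_on A P. \<Sum>C\<in>P. g C (P - {C}))
    = (\<Sum>B\<in>Pow A - {{}}. \<Sum>T | partition_on (A - B) T. g B T)"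
proof -
  have "(\<Sum>P | partition_on A P. \<Sum>C\<in>P. g C (P - {C}))
      = (\<Sum>(P, C)\<in>Sigma {P. partition_on A P} (\<lambda>P. P). g C (P - {C}))"
    using finitely_many_partition_on[OF A] finite_elements[OF A] by (intro sum.Sigma) auto
  also have "\<dots> = (\<Sum>(B, T)\<in>Sigma (Pow A - {{}}) (\<lambda>B. {T. partition_on (A - B) T}). g B T)"
  proof (rule sum.reindex_bij_witness[where i="\<lambda>(B, T). (insert B T, B)" and j="\<lambda>(P, C). (C, P - {C})"])
    fix a assume "a \<in> Sigma {P. partition_on A P} (\<lambda>P. P)"
    then obtain P C where a: "a = (P, C)" "partition_on A P" "C \<in> P" by auto
    then show "(case case a of (P, C) \<Rightarrow> (C, P - {C}) of (B, T) \<Rightarrow> (insert B T, B)) = a"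
      and "(case a of (P, C) \<Rightarrow> (C, P - {C})) \<in> Sigma (Pow A - {{}}) (\<lambda>B. {T. partition_on (A - B) T})"
      and "(case case a of (P, C) \<Rightarrow> (C, P - {C}) of (B, T) \<Rightarrow> g B T) = (case a of (P, C) \<Rightarrow> g C (P - {C}))"
      using partition_on_remove_block[OF a(2,3)] by auto
  next
    fix b assume "b \<in> Sigma (Pow A - {{}}) (\<lambda>B. {T. partition_on (A - B) T})"
    then obtain B T where b: "b = (B, T)" "partition_on (A - B) T" "B \<subseteq> A" "B \<noteq> {}" by auto
    then show "(case case b of (B, T) \<Rightarrow> (insert B T, B) of (P, C) \<Rightarrow> (C, P - {C})) = b"
      and "(case b of (B, T) \<Rightarrow> (insert B T, B)) \<in> Sigma {P. partition_on A P} (\<lambda>P. P)"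
      using partition_on_insert_block[OF b(2-4)] by auto
  qed
  also have "\<dots> = (\<Sum>B\<in>Pow A - {{}}. \<Sum>T | partition_on (A - B) T. g B T)"
    using A finitely_many_partition_on by (intro sum.Sigma[symmetric]) auto
  finally show ?thesis .
qed

lemma sum_partition_on_fact_sign_recurrence:
  assumes A: "finite A" "A \<noteq> {}"
  shows "(\<Sum>S | partition_on A S. fact (card S) * (-1::real) ^ card S)
    = - (\<Sum>B\<in>Pow A - {{}}. \<Sum>T | partition_on (A - B) T. fact (card T) * (-1) ^ card T)"
proof -
  let ?g = "\<lambda>C T. - (fact (card T) * (-1::real) ^ card T)"
  have "(\<Sum>S | partition_on A S. fact (card S) * (-1::real) ^ card S)
      = (\<Sum>S | partition_on A S. \<Sum>C\<in>S. ?g C (S - {C}))"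
  proof (rule sum.cong[OF refl])
    fix S assume "S \<in> {S. partition_on A S}"
    then have "finite S" "S \<noteq> {}"
      using finite_elements[OF A(1)] A(2) partition_onD1 by auto
    then obtain k where k: "card S = Suc k" by (metis card_gt_0_iff gr0_conv_Suc)
    then have "(\<Sum>C\<in>S. ?g C (S - {C})) = (\<Sum>C\<in>S. - (fact k * (-1) ^ k))"
      by (intro sum.cong) simp_all
    then show "fact (card S) * (-1) ^ card S = (\<Sum>C\<in>S. ?g C (S - {C}))"
      using k by (simp add: algebra_simps)
  qed
  also have "\<dots> = (\<Sum>B\<in>Pow A - {{}}. \<Sum>T | partition_on (A - B) T. ?g B T)"
    by (rule sum_partition_on_pick_block[OF A(1)])
  finally show ?thesis by (simp add: sum_negf)
qed

lemma sum_partition_on_fact_sign: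
  assumes "finite A"
  shows "(\<Sum>S | partition_on A S. fact (card S) * (-1::real) ^ card S) = (-1) ^ card A"
  using assms
proof (induction A rule: finite_psubset_induct)
  case (psubset A)
  show ?case
  proof (cases "A = {}")
    case True
    then show ?thesis by (simp add: partition_on_empty)
  next
    case False
    have "(\<Sum>T | partition_on (A - B) T. fact (card T) * (-1::real) ^ card T) = (-1) ^ (card A - card B)"
      if "B \<in> Pow A - {{}}" for B
    proof -
      have "A - B \<subset> A" "card (A - B) = card A - card B"
        using that psubset.hyps(1) by (auto simp: card_Diff_subset finite_subset)
      then show ?thesis using psubset.IH[of "A - B"] by simp
    qed
    moreover have "(\<Sum>B\<in>Pow A. (-1::real) ^ (card A - card B)) = 0"
      using sum_supersets_minus_one_power_diff[OF psubset.hyps(1), of "{}"] False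
      by (simp add: Pow_def psubset_eq)
    ultimately show ?thesis
      using psubset.hyps(1) False
      by (simp add: sum_partition_on_fact_sign_recurrence sum_diff1)
  qed
qed

lemma sum_partition_on_sum_blocks:
  fixes f :: "'a set \<Rightarrow> real"
  assumes I: "finite I"
  shows "(\<Sum>P | partition_on I P. fact (card P - 1) * (-1) ^ (card P - 1) * (\<Sum>C\<in>P. f C))
    = (\<Sum>B\<in>Pow I - {{}}. (-1) ^ (card I - card B) * f B)"
proof -
  let ?g = "\<lambda>C T. fact (card T) * (-1) ^ card T * f C"
  have "(\<Sum>P | partition_on I P. fact (card P - 1) * (-1) ^ (card P - 1) * (\<Sum>C\<in>P. f C))
      = (\<Sum>P | partition_on I P. \<Sum>C\<in>P. ?g C (P - {C}))"
    using finite_elements[OF I] by (intro sum.cong refl) (simp add: sum_distrib_left)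
  also have "\<dots> = (\<Sum>B\<in>Pow I - {{}}. \<Sum>T | partition_on (I - B) T. ?g B T)"
    by (rule sum_partition_on_pick_block[OF I])
  also have "\<dots> = (\<Sum>B\<in>Pow I - {{}}. (-1) ^ (card I - card B) * f B)"
  proof (rule sum.cong[OF refl])
    fix B assume B: "B \<in> Pow I - {{}}"
    have "(\<Sum>T | partition_on (I - B) T. ?g B T)
        = (\<Sum>T | partition_on (I - B) T. fact (card T) * (-1) ^ card T) * f B"
      by (simp add: sum_distrib_right)
    also have "\<dots> = (-1) ^ (card I - card B) * f B"
    proof -
      have "card (I - B) = card I - card B"
        using B I by (auto simp: card_Diff_subset finite_subset)
      then show ?thesis using I by (simp add: sum_partition_on_fact_sign)
    qed
    finally show "(\<Sum>T | partition_on (I - B) T. ?g B T) = (-1) ^ (card I - card B) * f B" .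
  qed
  finally show ?thesis .
qed

lemma partition_on_eq_singletons_iff:
  assumes T: "partition_on X T" and X: "finite X"
  shows "T = (\<lambda>x. {x}) ` X \<longleftrightarrow> (\<forall>C\<in>T. card C < 2)"
proof
  assume small: "\<forall>C\<in>T. card C < 2"
  have "\<exists>x. C = {x}" if "C \<in> T" for C
  proof -
    have "finite C" "C \<noteq> {}"
      using that X partition_onD1[OF T] partition_onD3[OF T] by (auto intro: finite_subset)
    moreover have "card C < 2" using small that by blast
    ultimately have "card C = 1" using card_gt_0_iff[of C] by linarith
    then show ?thesis by (simp add: card_1_singleton_iff)
  qed
  then show "T = (\<lambda>x. {x}) ` X"
    using partition_onD1[OF T] by blast
qed auto

definition lancaster :: "'a set set \<Rightarrow> bool" where
  "lancaster P \<longleftrightarrow> card {B\<in>P. 2 \<le> card B} \<le> 1"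

lemma lancaster_insert_iff:
  assumes T: "partition_on X T" and X: "finite X" and B: "2 \<le> card B" "B \<notin> T"
  shows "lancaster (insert B T) \<longleftrightarrow> T = (\<lambda>x. {x}) ` X"
proof -
  have "{C \<in> insert B T. 2 \<le> card C} = insert B {C \<in> T. 2 \<le> card C}"
    using B by auto
  moreover have "finite T" using finite_elements[OF X T] .
  ultimately have "lancaster (insert B T) \<longleftrightarrow> {C \<in> T. 2 \<le> card C} = {}"
    using B by (simp add: lancaster_def)
  also have "\<dots> \<longleftrightarrow> T = (\<lambda>x. {x}) ` X"
    by (auto simp: partition_on_eq_singletons_iff[OF T X] not_le)
  finally show ?thesis .
qed

lemma sum_partition_on_lancaster_insert:
  assumes I: "finite I" and B: "B \<subseteq> I" "2 \<le> card B"
  shows "(\<Sum>T | partition_on (I - B) T. if lancaster (insert B T) then (-1) ^ card T * c else 0)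
    = (-1) ^ (card I - card B) * (c::real)"
proof -
  let ?singletons = "(\<lambda>x. {x}) ` (I - B)"
  have "B \<noteq> {}" using B(2) by auto
  then have "B \<notin> T" if "partition_on (I - B) T" for T
    using partition_on_insert_block(2)[OF that B(1)] by simp
  then have "(\<Sum>T | partition_on (I - B) T. if lancaster (insert B T) then (-1) ^ card T * c else 0)
      = (\<Sum>T | partition_on (I - B) T. if T = ?singletons then (-1) ^ card T * c else 0)"
    using I B by (intro sum.cong) (auto simp: lancaster_insert_iff)
  also have "\<dots> = (-1) ^ card ?singletons * c"
    using finitely_many_partition_on[of "I - B"] I partition_on_singletons[of "I - B"]
    by (simp add: sum.delta)
  also have "card ?singletons = card I - card B"
    using B I by (auto simp: card_image card_Diff_subset finite_subset)
  finally show ?thesis .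
qed

lemma sum_lancaster_partitions_sum_blocks:
  fixes f :: "'a set \<Rightarrow> real"
  assumes I: "finite I" and f_singleton: "\<And>x. f {x} = 0"
  shows "(\<Sum>P | partition_on I P \<and> lancaster P. (-1) ^ (card P - 1) * (\<Sum>C\<in>P. f C))
    = (\<Sum>B\<in>Pow I - {{}}. (-1) ^ (card I - card B) * f B)"
proof -
  let ?g = "\<lambda>C T. if lancaster (insert C T) then (-1) ^ card T * f C else 0"
  have "(\<Sum>P | partition_on I P \<and> lancaster P. (-1) ^ (card P - 1) * (\<Sum>C\<in>P. f C))
      = (\<Sum>P | partition_on I P. if lancaster P then (-1) ^ (card P - 1) * (\<Sum>C\<in>P. f C) else 0)"
    using sum.inter_filter[OF finitely_many_partition_on[OF I], of _ lancaster]
    by (simp add: Collect_conj_eq[symmetric] del: One_nat_def)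
  also have "\<dots> = (\<Sum>P | partition_on I P. \<Sum>C\<in>P. ?g C (P - {C}))"
  proof (rule sum.cong[OF refl])
    fix P assume "P \<in> {P. partition_on I P}"
    then have "finite P" using finite_elements[OF I] by simp
    then have "?g C (P - {C}) = (if lancaster P then (-1) ^ (card P - 1) * f C else 0)" if "C \<in> P" for C
      using that by (simp add: insert_absorb)
    then show "(if lancaster P then (-1) ^ (card P - 1) * (\<Sum>C\<in>P. f C) else 0) = (\<Sum>C\<in>P. ?g C (P - {C}))"
      by (simp add: sum_distrib_left)
  qed
  also have "\<dots> = (\<Sum>B\<in>Pow I - {{}}. \<Sum>T | partition_on (I - B) T. ?g B T)"
    by (rule sum_partition_on_pick_block[OF I])
  also have "\<dots> = (\<Sum>B\<in>Pow I - {{}}. (-1) ^ (card I - card B) * f B)"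
  proof (rule sum.cong[OF refl])
    fix B assume B: "B \<in> Pow I - {{}}"
    show "(\<Sum>T | partition_on (I - B) T. ?g B T) = (-1) ^ (card I - card B) * f B"
    proof (cases "2 \<le> card B")
      case True
      then show ?thesis using B I by (simp add: sum_partition_on_lancaster_insert)
    next
      case False
      have "finite B" "B \<noteq> {}" using B I by (auto intro: finite_subset)
      then have "card B = 1" using False card_gt_0_iff[of B] by linarith
      then show ?thesis by (auto simp: card_1_singleton_iff f_singleton cong: if_cong)
    qed
  qed
  finally show ?thesis .
qed

definition total_corr :: "('a set \<Rightarrow> real) \<Rightarrow> 'a set \<Rightarrow> real" where
  "total_corr h B = (\<Sum>i\<in>B. h {i}) - h B"

lemma total_corr_singleton [simp]: "total_corr h {x} = 0"
  by (simp add: total_corr_def)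

lemma sum_total_corr_partition_on:
  assumes "finite A" "partition_on A P"
  shows "(\<Sum>C\<in>P. total_corr h C) = (\<Sum>i\<in>A. h {i}) - (\<Sum>C\<in>P. h C)"
proof -
  have "\<forall>C\<in>P. finite C"
    using assms partition_onD1[OF assms(2)] by (auto intro: finite_subset)
  moreover have "\<forall>C\<in>P. \<forall>D\<in>P. C \<noteq> D \<longrightarrow> C \<inter> D = {}"
    using partition_onD2[OF assms(2)] by (auto simp: pairwise_def disjnt_def)
  ultimately have "(\<Sum>i\<in>A. h {i}) = (\<Sum>C\<in>P. \<Sum>i\<in>C. h {i})"
    using sum.Union_disjoint[of P "\<lambda>i. h {i}"] partition_onD1[OF assms(2)] by simp
  then show ?thesis by (simp add: total_corr_def sum_subtractf)
qed

lemma neg_alternating_sum_eq_alternating_sum_total_corr: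
  assumes I: "finite I" "2 \<le> card I"
  shows "- (\<Sum>T\<in>Pow I. (-1) ^ (card I - card T) * h T)
    = (\<Sum>B\<in>Pow I. (-1) ^ (card I - card B) * total_corr h B)"
proof -
  have "(\<Sum>B\<in>Pow I. (-1) ^ (card I - card B) * (\<Sum>i\<in>B. h {i}))
      = (\<Sum>i\<in>I. h {i} * (\<Sum>B | B \<subseteq> I \<and> {i} \<subseteq> B. (-1) ^ (card I - card B)))"
  proof -
    have "(\<Sum>B\<in>Pow I. (-1) ^ (card I - card B) * (\<Sum>i\<in>B. h {i}))
        = (\<Sum>B\<in>Pow I. \<Sum>i | i \<in> I \<and> i \<in> B. (-1) ^ (card I - card B) * h {i})"
      by (intro sum.cong) (auto simp: sum_distrib_left intro: arg_cong[where f = "sum _"])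
    also have "\<dots> = (\<Sum>i\<in>I. \<Sum>B | B \<in> Pow I \<and> i \<in> B. (-1) ^ (card I - card B) * h {i})"
      using I by (intro sum.swap_restrict) auto
    finally show ?thesis by (simp add: sum_distrib_left mult.commute)
  qed
  also have "\<dots> = 0"
  proof (intro sum.neutral ballI)
    fix i assume "i \<in> I"
    with I have "{i} \<subset> I" by (auto simp: card_le_Suc0_iff_eq)
    then show "h {i} * (\<Sum>B | B \<subseteq> I \<and> {i} \<subseteq> B. (-1) ^ (card I - card B)) = 0"
      using sum_supersets_minus_one_power_diff[OF I(1) \<open>{i} \<subset> I\<close>, where 'b=real] by simp
  qed
  finally show ?thesis
    by (simp add: total_corr_def right_diff_distrib sum_subtractf)
qed

theorem proposition1:
  fixes d :: nat and p :: "(nat \<Rightarrow> real) \<Rightarrow> real"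
  assumes "d \<ge> 2"
    and meas: "p \<in> borel_measurable (Leb {..<d})"
    and nonneg: "\<And>x. x \<in> space (Leb {..<d}) \<Longrightarrow> 0 \<le> p x"
    and integ: "integrable (Leb {..<d}) p"
    and total: "(\<integral>x. p x \<partial>Leb {..<d}) = 1"
    and fin_ent: "\<And>b. b \<subseteq> {..<d} \<Longrightarrow>
       integrable (Leb b) (\<lambda>y. marg {..<d} p b y * ln (marg {..<d} p b y))"
    and fin_KL: "\<And>P. partition_on {..<d} P \<Longrightarrow>
       integrable (Leb {..<d})
         (\<lambda>x. part_dens {..<d} p P x * ln (part_dens {..<d} p P x / indep_dens {..<d} p x))"
  shows "II d p = LI d p \<and> LI d p = SI d p"
proof -
  let ?I = "{..<d}" and ?h = "ent {..<d} p"
  interpret joint_density ?I p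
    using meas nonneg integ total by unfold_locales simp_all
  define V where "V = (\<Sum>B\<in>Pow ?I. (-1) ^ (card ?I - card B) * total_corr ?h B)"
  have KL: "KL_part ?I p P = (\<Sum>C\<in>P. total_corr ?h C)" if "partition_on ?I P" for P
    using KL_part_eq_entropies[OF that fin_ent] sum_total_corr_partition_on[OF _ that] by simp
  have V_nonempty: "V = (\<Sum>B\<in>Pow ?I - {{}}. (-1) ^ (card ?I - card B) * total_corr ?h B)"
    unfolding V_def by (simp add: sum_diff1 total_corr_def ent_empty)
  have "II d p = V"
    unfolding II_def V_def using neg_alternating_sum_eq_alternating_sum_total_corr[of ?I ?h] assms(1) by simp
  moreover have "LI d p = V"
    unfolding LI_def V_nonempty
    using sum_lancaster_partitions_sum_blocks[of ?I "total_corr ?h", unfolded lancaster_def]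
    by (simp add: KL cong: sum.cong_simp)
  moreover have "SI d p = V"
    unfolding SI_def V_nonempty using sum_partition_on_sum_blocks[of ?I "total_corr ?h"]
    by (simp add: KL mult.assoc cong: sum.cong_simp)
  ultimately show ?thesis by simp
qed

end
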